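(* For every main stack $S$, every expression $e$, every expression context $C[\cdot]$, and all finite sequences of (non-holed) expressions $E_1,E_2,E'$: if $r(S\ \ E_1.C[e].E_2)=E'$, then there exist sequences $E'_1,E'_2$ and a context $C'[\cdot]$ with $E'=E'_1.C'[e].E'_2$.
   Context: Expressions: $e ::= x_h \mid c_h \mid [\mathrm{let}_h\,x_1\dots x_n \text{ be } e \text{ in } e] \mid [\mathrm{call}_h\,f\ e_1\dots e_n] \mid [\mathrm{primitive}_h\,\pi\ e_1\dots e_n] \mid [\mathrm{if}_h\,e\in\{c_1,\dots,c_n\}\text{ then } e \text{ else } e] \mid [\mathrm{fork}_h\,f\ e_1\dots e_n] \mid [\mathrm{join}_h\,e] \mid [\mathrm{bundle}_h\,e_1\dots e_n]$, over variables $x$, values $c$, procedure names $f$, primitive names $\pi$ and handles $h$. Holed expressions additionally include $[\mathrm{let}_h\,x_1..x_n\text{ be }\Box\text{ in }e]$, $[\mathrm{call}_h f\,\Box]$, $[\mathrm{primitive}_h\pi\,\Box]$, $[\mathrm{if}_h\Box\in\{c_1..c_n\}\text{ then }e\text{ else }e']$, $[\mathrm{bundle}_h\Box]$, $[\mathrm{fork}_h f\,\Box]$, $[\mathrm{join}_h\Box]$. A main stack is a finite sequence of pairs (holed expression, local environment $\rho$), written top-first with dots; sequences of expressions are likewise written with dots, and $C[\cdot]$ denotes an expression with one hole in a subexpression position. Resynthesization $r(S\ E)$ (with all primed handles on the right-hand sides fresh, and the choice of handles considered immaterial) is defined by: $r(\langle\rangle\ E)=E$; $r((e,\rho).S\ E)=r(S\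 e.E)$ for non-holed $e$; $r(([\mathrm{let}_{h_0}x_1..x_n\text{ be }\Box\text{ in }e_2],\rho).S\ a.E)=r(([\mathrm{let}_{h'_0}x_1..x_n\text{ be }a\text{ in }e_2],\rho).S\ E)$; $r(([\mathrm{call}_{h_0}f\,\Box],\rho).S\ a_n a_{n-1}\cdots a_1.E)=r(([\mathrm{call}_{h'_0}f\,a_1..a_n],\rho).S\ E)$; $r(([\mathrm{primitive}_{h_0}\pi\,\Box],\rho).S\ a_n\cdots a_1.E)=r(([\mathrm{primitive}_{h'_0}\pi\,a_1..a_n],\rho).S\ E)$; $r(([\mathrm{if}_{h_0}\Box\in\{c_1..c_n\}\text{ then }e_2\text{ else }e_3],\rho).S\ a.E)=r(([\mathrm{if}_{h'_0}a\in\{c_1..c_n\}\text{ then }e_2\text{ else }e_3],\rho).S\ E)$; $r(([\mathrm{bundle}_{h_0}\Box],\rho).S\ a_n\cdots a_1.E)=r(([\mathrm{bundle}_{h'_0}a_1..a_n],\rho).S\ E)$; $r(([\mathrm{fork}_{h_0}f\,\Box],\rho).S\ a_n\cdots a_1.E)=r(([\mathrm{fork}_{h'_0}f\,a_1..a_n],\rho).S\ E)$; $r(([\mathrm{join}_{h_0}\Box],\rho).S\ a.E)=r(([\mathrm{join}_{h'_0}a],\rho).S\ E)$. *)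

theory Defs
  imports Main
begin

datatype (hdls: 'h, evars: 'x, evals: 'c, eprocs: 'f, eprims: 'p) expr =
    Var 'h 'x
  | Val 'h 'c
  | Let 'h "'x list" "('h,'x,'c,'f,'p) expr" "('h,'x,'c,'f,'p) expr"
  | Call 'h 'f "('h,'x,'c,'f,'p) expr list"
  | Prim 'h 'p "('h,'x,'c,'f,'p) expr list"
  | If 'h "('h,'x,'c,'f,'p) expr" "'c list" "('h,'x,'c,'f,'p) expr" "('h,'x,'c,'f,'p) expr"
  | Fork 'h 'f "('h,'x,'c,'f,'p) expr list"
  | Join 'h "('h,'x,'c,'f,'p) expr"
  | Bundle 'h "('h,'x,'c,'f,'p) expr list"

text \<open>Holed expressions (the hole is written as the missing argument(s)).\<close>
datatype (hhdls: 'h, hvars: 'x, hvals: 'c, hprocs: 'f, hprims: 'p) hexpr =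
    HLet 'h "'x list" "('h,'x,'c,'f,'p) expr"          \<comment> \<open>[let_h xs be \<box> in e2]\<close>
  | HCall 'h 'f
  | HPrim 'h 'p
  | HIf 'h "'c list" "('h,'x,'c,'f,'p) expr" "('h,'x,'c,'f,'p) expr" \<comment> \<open>[if_h \<box> in cs then e2 else e3]\<close>
  | HBundle 'h
  | HFork 'h 'f
  | HJoin 'h

datatype ('h,'x,'c,'f,'p) sexpr =
    Full "('h,'x,'c,'f,'p) expr"
  | Holed "('h,'x,'c,'f,'p) hexpr"

fun sexpr_hdls :: "('h,'x,'c,'f,'p) sexpr \<Rightarrow> 'h set" where
  "sexpr_hdls (Full e) = hdls e"
| "sexpr_hdls (Holed h) = hhdls h"

text \<open>Main stack: list of pairs (holed expression, local environment), top first;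
  the environment type 'r is kept abstract.\<close>
type_synonym ('h,'x,'c,'f,'p,'r) stack = "(('h,'x,'c,'f,'p) sexpr \<times> 'r) list"

definition config_hdls :: "('h,'x,'c,'f,'p,'r) stack \<Rightarrow> ('h,'x,'c,'f,'p) expr list \<Rightarrow> 'h set" where
  "config_hdls S E = (\<Union>p\<in>set S. sexpr_hdls (fst p)) \<union> (\<Union>e\<in>set E. hdls e)"

text \<open>Resynthesization r(S E) = E', as a relation (fresh handles may be chosen
  arbitrarily among those not occurring in the current configuration; the number
  n of popped arguments for call/primitive/bundle/fork is not recorded in the
  holed expression and so may be any n).\<close>
inductive resynth :: "('h,'x,'c,'f,'p,'r) stack \<Rightarrow> ('h,'x,'c,'f,'p) expr list \<Rightarrow> ('h,'x,'c,'f,'p) expr list \<Rightarrow> bool" where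
  r_nil: "resynth [] E E"
| r_full: "resynth S (e # E) E' \<Longrightarrow> resynth ((Full e, \<rho>) # S) E E'"
| r_let: "h' \<notin> config_hdls ((Holed (HLet h xs e2), \<rho>) # S) (a # E) \<Longrightarrow>
    resynth ((Full (Let h' xs a e2), \<rho>) # S) E E' \<Longrightarrow>
    resynth ((Holed (HLet h xs e2), \<rho>) # S) (a # E) E'"
| r_call: "h' \<notin> config_hdls ((Holed (HCall h f), \<rho>) # S) (rev as @ E) \<Longrightarrow>
    resynth ((Full (Call h' f as), \<rho>) # S) E E' \<Longrightarrow>
    resynth ((Holed (HCall h f), \<rho>) # S) (rev as @ E) E'"
| r_prim: "h' \<notin> config_hdls ((Holed (HPrim h p), \<rho>) # S) (rev as @ E) \<Longrightarrow>
    resynth ((Full (Prim h' p as), \<rho>) # S) E E' \<Longrightarrow>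
    resynth ((Holed (HPrim h p), \<rho>) # S) (rev as @ E) E'"
| r_if: "h' \<notin> config_hdls ((Holed (HIf h cs e2 e3), \<rho>) # S) (a # E) \<Longrightarrow>
    resynth ((Full (If h' a cs e2 e3), \<rho>) # S) E E' \<Longrightarrow>
    resynth ((Holed (HIf h cs e2 e3), \<rho>) # S) (a # E) E'"
| r_bundle: "h' \<notin> config_hdls ((Holed (HBundle h), \<rho>) # S) (rev as @ E) \<Longrightarrow>
    resynth ((Full (Bundle h' as), \<rho>) # S) E E' \<Longrightarrow>
    resynth ((Holed (HBundle h), \<rho>) # S) (rev as @ E) E'"
| r_fork: "h' \<notin> config_hdls ((Holed (HFork h f), \<rho>) # S) (rev as @ E) \<Longrightarrow>
    resynth ((Full (Fork h' f as), \<rho>) # S) E E' \<Longrightarrow>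
    resynth ((Holed (HFork h f), \<rho>) # S) (rev as @ E) E'"
| r_join: "h' \<notin> config_hdls ((Holed (HJoin h), \<rho>) # S) (a # E) \<Longrightarrow>
    resynth ((Full (Join h' a), \<rho>) # S) E E' \<Longrightarrow>
    resynth ((Holed (HJoin h), \<rho>) # S) (a # E) E'"

datatype ('h,'x,'c,'f,'p) ctx =
    Hole
  | CLetB 'h "'x list" "('h,'x,'c,'f,'p) ctx" "('h,'x,'c,'f,'p) expr"
  | CLetI 'h "'x list" "('h,'x,'c,'f,'p) expr" "('h,'x,'c,'f,'p) ctx"
  | CCall 'h 'f "('h,'x,'c,'f,'p) expr list" "('h,'x,'c,'f,'p) ctx" "('h,'x,'c,'f,'p) expr list"
  | CPrim 'h 'p "('h,'x,'c,'f,'p) expr list" "('h,'x,'c,'f,'p) ctx" "('h,'x,'c,'f,'p) expr list"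
  | CIfC 'h "('h,'x,'c,'f,'p) ctx" "'c list" "('h,'x,'c,'f,'p) expr" "('h,'x,'c,'f,'p) expr"
  | CIfT 'h "('h,'x,'c,'f,'p) expr" "'c list" "('h,'x,'c,'f,'p) ctx" "('h,'x,'c,'f,'p) expr"
  | CIfE 'h "('h,'x,'c,'f,'p) expr" "'c list" "('h,'x,'c,'f,'p) expr" "('h,'x,'c,'f,'p) ctx"
  | CFork 'h 'f "('h,'x,'c,'f,'p) expr list" "('h,'x,'c,'f,'p) ctx" "('h,'x,'c,'f,'p) expr list"
  | CJoin 'h "('h,'x,'c,'f,'p) ctx"
  | CBundle 'h "('h,'x,'c,'f,'p) expr list" "('h,'x,'c,'f,'p) ctx" "('h,'x,'c,'f,'p) expr list"

fun plug :: "('h,'x,'c,'f,'p) ctx \<Rightarrow> ('h,'x,'c,'f,'p) expr \<Rightarrow> ('h,'x,'c,'f,'p) expr" where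
  "plug Hole e = e"
| "plug (CLetB h xs C e2) e = Let h xs (plug C e) e2"
| "plug (CLetI h xs e1 C) e = Let h xs e1 (plug C e)"
| "plug (CCall h f as C bs) e = Call h f (as @ plug C e # bs)"
| "plug (CPrim h p as C bs) e = Prim h p (as @ plug C e # bs)"
| "plug (CIfC h C cs e2 e3) e = If h (plug C e) cs e2 e3"
| "plug (CIfT h e1 cs C e3) e = If h e1 cs (plug C e) e3"
| "plug (CIfE h e1 cs e2 C) e = If h e1 cs e2 (plug C e)"
| "plug (CFork h f as C bs) e = Fork h f (as @ plug C e # bs)"
| "plug (CJoin h C) e = Join h (plug C e)"
| "plug (CBundle h as C bs) e = Bundle h (as @ plug C e # bs)"

end

theory Submission
  imports Defs
begin

text \<open>Resynthesization only ever wraps expressions into larger ones: every argument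
  popped from the expression sequence becomes a direct subexpression of the
  expression pushed in its place. So the property ``some expression of the
  configuration (on the sequence, or a non-holed stack entry) contains e in a
  subexpression position'' is invariant, and at the end the stack is empty.\<close>

definition occurs_in :: "('h,'x,'c,'f,'p) expr \<Rightarrow> ('h,'x,'c,'f,'p) expr \<Rightarrow> bool" where
  "occurs_in e x \<longleftrightarrow> (\<exists>C. x = plug C e)"

lemma occurs_in_plug: "occurs_in e (plug C e)"
  unfolding occurs_in_def by blast

lemma occurs_in_Let: "occurs_in e a \<Longrightarrow> occurs_in e (Let h xs a e2)"
  unfolding occurs_in_def by (metis plug.simps(2))

lemma occurs_in_If: "occurs_in e a \<Longrightarrow> occurs_in e (If h a cs e2 e3)"
  unfolding occurs_in_def by (metis plug.simps(6))

lemma occurs_in_Join: "occurs_in e a \<Longrightarrow> occurs_in e (Join h a)"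
  unfolding occurs_in_def by (metis plug.simps(10))

lemma occurs_in_args:
  assumes "a \<in> set as" "occurs_in e a"
  shows "occurs_in e (Call h f as)" "occurs_in e (Prim h p as)"
    and "occurs_in e (Fork h f as)" "occurs_in e (Bundle h as)"
proof -
  obtain as1 as2 where "as = as1 @ a # as2" using assms(1) split_list by metis
  moreover obtain C where "a = plug C e" using assms(2) occurs_in_def by metis
  ultimately show "occurs_in e (Call h f as)" "occurs_in e (Prim h p as)"
    and "occurs_in e (Fork h f as)" "occurs_in e (Bundle h as)"
    unfolding occurs_in_def by (metis plug.simps(4,5,9,11))+
qed

definition occurs_in_config ::
    "('h,'x,'c,'f,'p) expr \<Rightarrow> ('h,'x,'c,'f,'p,'r) stack \<Rightarrow> ('h,'x,'c,'f,'p) expr list \<Rightarrow> bool" where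
  "occurs_in_config e S E \<longleftrightarrow>
     (\<exists>x\<in>set E. occurs_in e x) \<or> (\<exists>x \<rho>. (Full x, \<rho>) \<in> set S \<and> occurs_in e x)"

lemma occurs_in_config_pop_args:
  assumes "occurs_in_config e ((Holed hx, \<rho>) # S) (rev as @ E)"
    and "\<And>a. a \<in> set as \<Longrightarrow> occurs_in e a \<Longrightarrow> occurs_in e x"
  shows "occurs_in_config e ((Full x, \<rho>) # S) E"
  using assms unfolding occurs_in_config_def by auto

lemma resynth_preserves_occurrence:
  assumes "resynth S E E'" "occurs_in_config e S E"
  shows "\<exists>x\<in>set E'. occurs_in e x"
  using assms
proof (induction rule: resynth.induct)
  case (r_let h' h xs e2 \<rho> S a E E')
  then show ?case by (auto simp: occurs_in_config_def intro: occurs_in_Let)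
next
  case (r_call h' h f \<rho> S as E E')
  then show ?case by (metis occurs_in_config_pop_args occurs_in_args(1))
next
  case (r_prim h' h p \<rho> S as E E')
  then show ?case by (metis occurs_in_config_pop_args occurs_in_args(2))
next
  case (r_if h' h cs e2 e3 \<rho> S a E E')
  then show ?case by (auto simp: occurs_in_config_def intro: occurs_in_If)
next
  case (r_bundle h' h \<rho> S as E E')
  then show ?case by (metis occurs_in_config_pop_args occurs_in_args(4))
next
  case (r_fork h' h f \<rho> S as E E')
  then show ?case by (metis occurs_in_config_pop_args occurs_in_args(3))
next
  case (r_join h' h \<rho> S a E E')
  then show ?case by (auto simp: occurs_in_config_def intro: occurs_in_Join)
qed (auto simp: occurs_in_config_def)

theorem mainTheorem4:
  fixes S :: "('h,'x,'c,'f,'p,'r) stack"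
    and e :: "('h,'x,'c,'f,'p) expr"
    and C :: "('h,'x,'c,'f,'p) ctx"
    and E1 E2 E' :: "('h,'x,'c,'f,'p) expr list"
  assumes "resynth S (E1 @ plug C e # E2) E'"
  shows "\<exists>E1' E2' C'. E' = E1' @ plug C' e # E2'"
proof -
  have "occurs_in_config e S (E1 @ plug C e # E2)"
    unfolding occurs_in_config_def using occurs_in_plug by auto
  with assms obtain x where "x \<in> set E'" "occurs_in e x"
    using resynth_preserves_occurrence by blast
  then show ?thesis unfolding occurs_in_def by (metis split_list)
qed

end
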